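(* Let $\rho=|\psi\rangle\langle\psi|$ be an $n$-qubit pure state and $S\subseteq[n]$ non-empty with $s=|S|$. Let $\{p_j,|\phi_j\rangle\}_{j=1}^N$ be a single-qubit projective 2-design. For $\mathbf{q}\in\{1,\dots,N\}^s$ let $|\Phi_{\mathbf{q}}\rangle\langle\Phi_{\mathbf{q}}|=\bigotimes_{i\in S}|\phi_{q_i}\rangle\langle\phi_{q_i}|$ (acting on the qubits in $S$, identity elsewhere), and let $\Phi$ denote the random choice of $\mathbf{q}$ with the $q_i$ independent and each distributed according to $(p_j)_j$. Then $$\mathcal{C}_{|\psi\rangle}(S)=1-3^s\,\mathbb{E}_\Phi\big[\operatorname{tr}(\rho|\Phi\rangle\langle\Phi|)^2\big].$$
   Context: $[n]=\{1,\dots,n\}$ labels the qubits. For an $n$-qubit pure state $|\psi\rangle$ and a non-empty $S\subseteq[n]$ with $s=|S|$, the concentratable entanglement is $\mathcal{C}_{|\psi\rangle}(S)=1-\frac{1}{2^s}\sum_{\alpha\subseteq S}\operatorname{tr}(\rho_\alpha^2)$, where $\rho_\alpha$ is the reduced state of $|\psi\rangle\langle\psi|$ on the qubits in $\alpha$, and $\operatorname{tr}(\rho_\emptyset^2):=1$. A single-qubit projective 2-design is a probability distribution $\{p_j,|\phi_j\rangle\}_{j=1}^N$ over single-qubit pure states such that $\sum_j p_j(|\phi_j\rangle\langle\phi_j|)^{\otimes2}=\int(|\psi\rangle\langle\psi|)^{\otimes 2}\,d\psi$, the integral being over the Haar (unitarily invariant) measure on single-qubit pure states. *)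

theory Defs
  imports "HOL-Analysis.Analysis"
begin

text \<open>Qubits are indexed by a finite type 'n (so n = CARD('n)); computational basis
states are bit assignments 'n \<Rightarrow> bool; a pure state is an amplitude function.\<close>

definition conf :: "'n set \<Rightarrow> ('n \<Rightarrow> bool) set" where
  "conf A = {a. \<forall>i. i \<notin> A \<longrightarrow> a i = False}"

definition merge :: "'n set \<Rightarrow> ('n \<Rightarrow> bool) \<Rightarrow> ('n \<Rightarrow> bool) \<Rightarrow> ('n \<Rightarrow> bool)" where
  "merge A a c = (\<lambda>i. if i \<in> A then a i else c i)"

definition reduced :: "(('n::finite \<Rightarrow> bool) \<Rightarrow> complex) \<Rightarrow> 'n set \<Rightarrow> ('n \<Rightarrow> bool) \<Rightarrow> ('n \<Rightarrow> bool) \<Rightarrow> complex" where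
  "reduced \<psi> A a b = (\<Sum>c\<in>conf (- A). \<psi> (merge A a c) * cnj (\<psi> (merge A b c)))"

text \<open>tr(rho_A^2), with the convention tr(rho_empty^2) = 1.\<close>
definition purity :: "(('n::finite \<Rightarrow> bool) \<Rightarrow> complex) \<Rightarrow> 'n set \<Rightarrow> complex" where
  "purity \<psi> A = (if A = {} then 1 else
     (\<Sum>a\<in>conf A. \<Sum>b\<in>conf A. reduced \<psi> A a b * reduced \<psi> A b a))"

definition conc_ent :: "(('n::finite \<Rightarrow> bool) \<Rightarrow> complex) \<Rightarrow> 'n set \<Rightarrow> complex" where
  "conc_ent \<psi> S = 1 - (1 / 2 ^ card S) * (\<Sum>A\<in>Pow S. purity \<psi> A)"

text \<open>Haar (unitarily invariant) second moment of single-qubit pure states: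
  entry <a b| E[(|psi><psi|)^{(x)2}] |c d>.  The Haar measure on unit vectors of C^2
  is realised as the radial projection of the uniform distribution on the unit ball of C^2.\<close>
definition qcomp :: "complex \<times> complex \<Rightarrow> bool \<Rightarrow> complex" where
  "qcomp z b = (if b then snd z else fst z)"

definition haar_moment :: "bool \<Rightarrow> bool \<Rightarrow> bool \<Rightarrow> bool \<Rightarrow> complex" where
  "haar_moment a b c d =
     integral (ball (0::complex \<times> complex) 1)
       (\<lambda>z. qcomp z a * qcomp z b * cnj (qcomp z c) * cnj (qcomp z d) / of_real (norm z ^ 4))
     / of_real (measure lborel (ball (0::complex \<times> complex) 1))"

definition is_2design :: "nat \<Rightarrow> (nat \<Rightarrow> real) \<Rightarrow> (nat \<Rightarrow> bool \<Rightarrow> complex) \<Rightarrow> bool" where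
  "is_2design N p \<phi> \<longleftrightarrow>
     (\<forall>j\<in>{1..N}. p j \<ge> 0) \<and> (\<Sum>j=1..N. p j) = 1 \<and>
     (\<forall>j\<in>{1..N}. (cmod (\<phi> j False))^2 + (cmod (\<phi> j True))^2 = 1) \<and>
     (\<forall>a b c d. (\<Sum>j=1..N. of_real (p j) * (\<phi> j a * \<phi> j b * cnj (\<phi> j c) * cnj (\<phi> j d)))
                 = haar_moment a b c d)"

definition proj :: "'n set \<Rightarrow> (nat \<Rightarrow> bool \<Rightarrow> complex) \<Rightarrow> ('n \<Rightarrow> nat) \<Rightarrow> ('n::finite \<Rightarrow> bool) \<Rightarrow> ('n \<Rightarrow> bool) \<Rightarrow> complex" where
  "proj S \<phi> q x y = (\<Prod>i\<in>S. \<phi> (q i) (x i) * cnj (\<phi> (q i) (y i))) *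
                     (\<Prod>i\<in>- S. if x i = y i then 1 else 0)"

text \<open>tr(rho |Phi_q><Phi_q|) with rho = |psi><psi|, rho_{y x} = psi y * cnj (psi x).\<close>
definition tr_proj :: "(('n::finite \<Rightarrow> bool) \<Rightarrow> complex) \<Rightarrow> 'n set \<Rightarrow> (nat \<Rightarrow> bool \<Rightarrow> complex) \<Rightarrow> ('n \<Rightarrow> nat) \<Rightarrow> complex" where
  "tr_proj \<psi> S \<phi> q = (\<Sum>x\<in>UNIV. \<Sum>y\<in>UNIV. \<psi> y * cnj (\<psi> x) * proj S \<phi> q x y)"

end

theory Submission
  imports Defs
begin

text \<open>The Haar average of \<open>(|\<phi>\<rangle>\<langle>\<phi>|)\<^sup>\<otimes>\<^sup>2\<close> over qubit states is \<open>(I + SWAP)/6\<close>. Its entries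
  are moments of the uniform distribution on the unit ball of \<open>\<complex>\<^sup>2\<close>, radially projected.
  Invariance of Lebesgue measure under the phase rotation \<open>(z\<^sub>1, z\<^sub>2) \<mapsto> (z\<^sub>1, i z\<^sub>2)\<close> kills all
  entries but the pairings; the coordinate swap and the rotation by \<open>\<pi>/4\<close> relate the two
  remaining kinds of entry, and \<open>|z\<^sub>1|\<^sup>2 + |z\<^sub>2|\<^sup>2 = |z|\<^sup>2\<close> normalises them.
  As \<open>tr(\<rho> \<Phi>)\<^sup>2 = tr((\<rho> \<otimes> \<rho>)(\<Phi> \<otimes> \<Phi>))\<close>, averaging over the product design gives
  \<open>6\<^sup>-\<^sup>s\<close> times the sum over \<open>A \<subseteq> S\<close> of \<open>tr((\<rho> \<otimes> \<rho>) SWAP\<^sub>A)\<close>, and the swap trick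
  \<open>tr((\<rho> \<otimes> \<rho>) SWAP\<^sub>A) = tr(\<rho>\<^sub>A\<^sup>2)\<close> together with \<open>3\<^sup>s 6\<^sup>-\<^sup>s = 2\<^sup>-\<^sup>s\<close> gives the claim.\<close>

definition lborel_preserving :: "('a::euclidean_space \<Rightarrow> 'a) \<Rightarrow> bool" where
  "lborel_preserving T \<longleftrightarrow> T \<in> borel_measurable borel \<and> distr lborel borel T = lborel"

lemma lborel_preserving_comp:
  assumes "lborel_preserving f" "lborel_preserving g"
  shows "lborel_preserving (g \<circ> f)"
proof -
  have "distr lborel borel (g \<circ> f) = distr (distr lborel borel f) borel g"
    using assms by (subst distr_distr) (auto simp: lborel_preserving_def)
  with assms show ?thesis
    by (auto simp: lborel_preserving_def intro: measurable_comp)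
qed

lemma lborel_preserving_fibrewise:
  fixes h :: "'a::euclidean_space \<Rightarrow> 'b::euclidean_space \<Rightarrow> 'b"
  assumes T_meas: "(\<lambda>z. (fst z, h (fst z) (snd z))) \<in> borel_measurable borel"
    and h_meas: "\<And>x. h x \<in> borel_measurable borel"
    and h_distr: "\<And>x. distr lborel borel (h x) = lborel"
  shows "lborel_preserving (\<lambda>z. (fst z, h (fst z) (snd z)))"
  unfolding lborel_preserving_def
proof (intro conjI T_meas measure_eqI)
  let ?T = "\<lambda>z. (fst z, h (fst z) (snd z))"
  fix A :: "('a \<times> 'b) set"
  assume "A \<in> sets (distr lborel borel ?T)"
  then have A_borel: "A \<in> sets borel"
    by simp
  then have A: "A \<in> sets (lborel \<Otimes>\<^sub>M lborel)"
    unfolding lborel_prod by simp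
  have TA: "?T -` A \<in> sets (lborel \<Otimes>\<^sub>M lborel)"
    using T_meas A unfolding lborel_prod by (simp add: measurable_def)
  have fibre: "emeasure lborel (Pair x -` ?T -` A) = emeasure lborel (Pair x -` A)" for x
  proof -
    have "Pair x -` ?T -` A = h x -` Pair x -` A"
      by auto
    then have "emeasure lborel (Pair x -` ?T -` A) = emeasure (distr lborel borel (h x)) (Pair x -` A)"
      using sets_Pair1[OF A] h_meas by (simp add: emeasure_distr)
    then show ?thesis
      by (simp add: h_distr)
  qed
  have "emeasure (distr lborel borel ?T) A = emeasure (lborel \<Otimes>\<^sub>M lborel) (?T -` A)"
    using A_borel T_meas by (simp add: emeasure_distr lborel_prod)
  also have "\<dots> = (\<integral>\<^sup>+x. emeasure lborel (Pair x -` ?T -` A) \<partial>lborel)"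
    by (rule lborel.emeasure_pair_measure_alt[OF TA])
  also have "\<dots> = (\<integral>\<^sup>+x. emeasure lborel (Pair x -` A) \<partial>lborel)"
    by (simp only: fibre)
  also have "\<dots> = emeasure lborel A"
    using lborel.emeasure_pair_measure_alt[OF A] by (simp add: lborel_prod)
  finally show "emeasure (distr lborel borel ?T) A = emeasure lborel A" .
qed (simp only: sets_distr sets_lborel)

lemma lborel_preserving_shear:
  fixes f :: "'a::euclidean_space \<Rightarrow> 'b::euclidean_space"
  assumes [measurable]: "f \<in> borel_measurable borel"
  shows "lborel_preserving (\<lambda>z. (fst z, f (fst z) + snd z))"
proof (rule lborel_preserving_fibrewise)
  show "distr lborel borel ((+) (f x)) = lborel" for x
    by (rule lborel_distr_plus)
qed (unfold borel_prod[symmetric], measurable)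

lemma lborel_preserving_swap:
  "lborel_preserving (\<lambda>z::'a::euclidean_space \<times> 'a. (snd z, fst z))"
proof -
  have "(lborel :: ('a \<times> 'a) measure) = distr lborel lborel (\<lambda>(x, y). (y, x))"
    using lborel_pair.distr_pair_swap by (simp add: lborel_prod)
  also have "\<dots> = distr lborel borel (\<lambda>z. (snd z, fst z))"
    by (rule distr_cong) (auto simp: case_prod_beta)
  moreover have "(\<lambda>z::'a \<times> 'a. (snd z, fst z)) \<in> borel_measurable borel"
    by (intro borel_measurable_continuous_onI continuous_intros)
  ultimately show ?thesis
    unfolding lborel_preserving_def by simp
qed

lemma lborel_preserving_shear_fst:
  fixes f :: "'a::euclidean_space \<Rightarrow> 'a"
  assumes "f \<in> borel_measurable borel"
  shows "lborel_preserving (\<lambda>z. (f (snd z) + fst z, snd z))"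
proof -
  have "lborel_preserving ((\<lambda>z. (snd z, fst z)) \<circ> (\<lambda>z. (fst z, f (fst z) + snd z)) \<circ> (\<lambda>z. (snd z, fst z)))"
    using assms by (intro lborel_preserving_comp lborel_preserving_swap lborel_preserving_shear)
  then show ?thesis
    by (simp add: comp_def)
qed

lemma lborel_distr_mult_ii: "distr lborel borel ((*) \<i>) = (lborel :: complex measure)"
proof (rule lborel_eqI[symmetric])
  fix l u :: complex
  assume le_Basis: "\<And>b. b \<in> Basis \<Longrightarrow> l \<bullet> b \<le> u \<bullet> b"
  have le: "Re l \<le> Re u" "Im l \<le> Im u"
    using le_Basis[of 1] le_Basis[of \<i>] by (auto simp: Basis_complex_def)
  have "(*) \<i> -` box l u = box (Complex (Im l) (- Re u)) (Complex (Im u) (- Re l))"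
    by (auto simp: box_def Basis_complex_def inner_complex_def)
  with le show "emeasure (distr lborel borel ((*) \<i>)) (box l u) = (\<Prod>b\<in>Basis. (u - l) \<bullet> b)"
    by (simp add: emeasure_distr emeasure_lborel_box_eq Basis_complex_def inner_complex_def
        ennreal_mult' mult.commute)
qed simp

lemma lborel_preserving_phase:
  "lborel_preserving (\<lambda>z::'a::euclidean_space \<times> complex. (fst z, \<i> * snd z))"
proof (rule lborel_preserving_fibrewise)
  show "(\<lambda>z::'a \<times> complex. (fst z, \<i> * snd z)) \<in> borel_measurable borel"
    by (intro borel_measurable_continuous_onI continuous_intros)
qed (simp_all add: lborel_distr_mult_ii)

definition rotate45 :: "complex \<times> complex \<Rightarrow> complex \<times> complex" where
  "rotate45 z = (of_real (sqrt 2 / 2) * (fst z - snd z), of_real (sqrt 2 / 2) * (fst z + snd z))"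

text \<open>A rotation is a product of three shears:
  \<open>[[c, -c], [c, c]] = [[1, a], [0, 1]] * [[1, 0], [c, 1]] * [[1, a], [0, 1]]\<close>
  with \<open>c = \<surd>2/2\<close> and \<open>a = 1 - \<surd>2\<close>.\<close>

lemma lborel_preserving_rotate45: "lborel_preserving rotate45"
proof -
  define c :: complex where "c = of_real (sqrt 2 / 2)"
  define shear_fst where "shear_fst z = ((1 - 2 * c) * snd z + fst z, snd z)" for z :: "complex \<times> complex"
  have c: "2 * c * c = 1"
    by (simp add: c_def field_simps flip: of_real_mult)
  have "shear_fst \<circ> (\<lambda>z. (fst z, c * fst z + snd z)) \<circ> shear_fst = rotate45"
  proof
    fix z :: "complex \<times> complex"
    have "(1 - 2 * c) * (c * ((1 - 2 * c) * y + x) + y) + ((1 - 2 * c) * y + x) = c * (x - y)" for x y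
      using c by algebra
    moreover have "c * ((1 - 2 * c) * y + x) + y = c * (x + y)" for x y
      using c by algebra
    ultimately show "(shear_fst \<circ> (\<lambda>z. (fst z, c * fst z + snd z)) \<circ> shear_fst) z = rotate45 z"
      unfolding rotate45_def c_def[symmetric] by (simp add: shear_fst_def)
  qed
  moreover have "lborel_preserving (shear_fst \<circ> (\<lambda>z. (fst z, c * fst z + snd z)) \<circ> shear_fst)"
    unfolding shear_fst_def
    by (intro lborel_preserving_comp lborel_preserving_shear_fst lborel_preserving_shear) simp_all
  ultimately show ?thesis
    by simp
qed

lemma norm_rotate45 [simp]: "norm (rotate45 z) = norm z"
proof -
  obtain x y where z: "z = (x, y)"
    by (cases z)
  define c where "c = sqrt 2 / 2"
  have "norm (rotate45 z) ^ 2 = c ^ 2 * norm (x - y) ^ 2 + c ^ 2 * norm (x + y) ^ 2"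
    unfolding rotate45_def c_def[symmetric] by (simp add: z norm_Pair norm_mult power_mult_distrib)
  also have "\<dots> = c ^ 2 * (norm (x - y) ^ 2 + norm (x + y) ^ 2)"
    by (rule distrib_left[symmetric])
  also have "\<dots> = norm x ^ 2 + norm y ^ 2"
    unfolding cmod_power2 by (simp add: c_def power_divide power2_eq_square algebra_simps)
  also have "\<dots> = norm z ^ 2"
    by (simp add: z norm_Pair)
  finally show ?thesis
    by (simp add: power2_eq_iff_nonneg)
qed

lemma set_integral_sum:
  fixes f :: "'i \<Rightarrow> 'a \<Rightarrow> 'b::{banach, second_countable_topology}"
  assumes "\<And>i. i \<in> I \<Longrightarrow> set_integrable M A (f i)"
  shows "set_integrable M A (\<lambda>x. \<Sum>i\<in>I. f i x)"
    and "(LINT x:A|M. (\<Sum>i\<in>I. f i x)) = (\<Sum>i\<in>I. LINT x:A|M. f i x)"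
  using assms unfolding set_integrable_def set_lebesgue_integral_def
  by (simp_all add: scaleR_sum_right)

lemma set_integral_ball_invariant:
  fixes g :: "'a::euclidean_space \<Rightarrow> 'b::{banach, second_countable_topology}"
  assumes T: "lborel_preserving T" "\<And>z. norm (T z) = norm z"
    and g: "g \<in> borel_measurable borel"
  shows "(LINT z:ball 0 r|lborel. g (T z)) = (LINT z:ball 0 r|lborel. g z)"
proof -
  have T_meas: "T \<in> borel_measurable borel" and T_distr: "distr lborel borel T = lborel"
    using T(1) by (auto simp: lborel_preserving_def)
  have "(\<lambda>z. indicator (ball 0 r) z *\<^sub>R g z) \<in> borel_measurable borel"
    by (intro borel_measurable_scaleR borel_measurable_indicator g) simp
  have "(LINT z:ball 0 r|lborel. g z) = integral\<^sup>L (distr lborel borel T) (\<lambda>z. indicator (ball 0 r) z *\<^sub>R g z)"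
    by (simp add: set_lebesgue_integral_def T_distr)
  also have "\<dots> = integral\<^sup>L lborel (\<lambda>z. indicator (ball 0 r) (T z) *\<^sub>R g (T z))"
    using T_meas \<open>(\<lambda>z. indicator (ball 0 r) z *\<^sub>R g z) \<in> borel_measurable borel\<close>
    by (subst integral_distr) simp_all
  also have "\<dots> = (LINT z:ball 0 r|lborel. g (T z))"
    by (simp add: set_lebesgue_integral_def indicator_def T(2))
  finally show ?thesis ..
qed

definition haar_integrand :: "bool \<Rightarrow> bool \<Rightarrow> bool \<Rightarrow> bool \<Rightarrow> complex \<times> complex \<Rightarrow> complex" where
  "haar_integrand a b c d z =
     qcomp z a * qcomp z b * cnj (qcomp z c) * cnj (qcomp z d) / of_real (norm z ^ 4)"

definition ball_moment :: "bool \<Rightarrow> bool \<Rightarrow> bool \<Rightarrow> bool \<Rightarrow> complex" where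
  "ball_moment a b c d = (LINT z:ball 0 1|lborel. haar_integrand a b c d z)"

lemma haar_integrand_measurable: "haar_integrand a b c d \<in> borel_measurable borel"
proof -
  have [measurable]: "(\<lambda>z. qcomp z x) \<in> borel_measurable borel" for x
    by (cases x) (simp_all add: qcomp_def borel_measurable_continuous_onI continuous_intros)
  have [measurable]: "(\<lambda>z. cnj (qcomp z x)) \<in> borel_measurable borel" for x
    by (cases x) (simp_all add: qcomp_def borel_measurable_continuous_onI continuous_intros)
  have [measurable]: "(\<lambda>z::complex \<times> complex. of_real (norm z ^ 4) :: complex) \<in> borel_measurable borel"
    by (intro borel_measurable_continuous_onI continuous_intros)
  show ?thesis
    unfolding haar_integrand_def[abs_def] by measurable
qed

lemma norm_qcomp_le: "norm (qcomp z a) \<le> norm z"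
  by (cases z; cases a) (simp_all add: qcomp_def norm_fst_le norm_snd_le)

lemma norm_haar_integrand_le: "norm (haar_integrand a b c d z) \<le> 1"
proof (cases "z = 0")
  case False
  have "norm (qcomp z a) * norm (qcomp z b) * norm (qcomp z c) * norm (qcomp z d) \<le> norm z ^ 4"
    unfolding power4_eq_xxxx by (intro mult_mono norm_qcomp_le) auto
  with False show ?thesis
    by (simp add: haar_integrand_def norm_mult norm_divide norm_power)
qed (simp add: haar_integrand_def)

lemma set_integrable_haar_integrand [simp]:
  "set_integrable lborel (ball 0 r) (haar_integrand a b c d)"
  unfolding set_integrable_def
  using haar_integrand_measurable norm_haar_integrand_le emeasure_lborel_ball_finite
  by (intro integrableI_bounded_set_indicator[where B=1]) auto

lemma haar_moment_eq_ball_moment: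
  "haar_moment a b c d = ball_moment a b c d / of_real (measure lborel (ball (0::complex \<times> complex) 1))"
  using set_borel_integral_eq_integral(2)[OF set_integrable_haar_integrand]
  by (simp add: haar_moment_def ball_moment_def haar_integrand_def[abs_def])

lemma ball_moment_commute:
  "ball_moment a b c d = ball_moment b a c d" "ball_moment a b c d = ball_moment a b d c"
  by (simp_all add: ball_moment_def haar_integrand_def mult_ac)

lemma ball_moment_eq_0:
  assumes "\<not> ((a = c \<and> b = d) \<or> (a = d \<and> b = c))"
  shows "ball_moment a b c d = 0"
proof -
  define phase :: "bool \<Rightarrow> complex" where "phase x = (if x then \<i> else 1)" for x
  define k where "k = phase a * phase b * cnj (phase c) * cnj (phase d)"
  have norm_phase: "norm (fst z, \<i> * snd z) = norm z" for z :: "complex \<times> complex"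
    by (cases z) (simp add: norm_Pair norm_mult)
  have "qcomp (fst z, \<i> * snd z) x = phase x * qcomp z x" for z x
    by (cases x) (simp_all add: qcomp_def phase_def)
  then have "haar_integrand a b c d (fst z, \<i> * snd z) = k * haar_integrand a b c d z" for z
    by (simp add: haar_integrand_def norm_phase k_def mult_ac)
  then have "k * ball_moment a b c d = ball_moment a b c d"
    using set_integral_ball_invariant[OF lborel_preserving_phase norm_phase,
        OF haar_integrand_measurable[of a b c d]]
    by (simp add: ball_moment_def)
  moreover have "k \<noteq> 1"
    using assms by (cases a; cases b; cases c; cases d) (simp_all add: k_def phase_def complex_eq_iff)
  ultimately show ?thesis
    by (metis mult_cancel_right1)
qed

lemma ball_moment_flip: "ball_moment a b c d = ball_moment (\<not> a) (\<not> b) (\<not> c) (\<not> d)"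
proof -
  have norm_swap: "norm (snd z, fst z) = norm z" for z :: "complex \<times> complex"
    by (cases z) (simp add: norm_Pair add.commute)
  have "haar_integrand a b c d (snd z, fst z) = haar_integrand (\<not> a) (\<not> b) (\<not> c) (\<not> d) z" for z
    by (simp add: haar_integrand_def qcomp_def norm_swap)
  then show ?thesis
    using set_integral_ball_invariant[OF lborel_preserving_swap norm_swap,
        OF haar_integrand_measurable[of a b c d]]
    by (simp add: ball_moment_def)
qed

lemma haar_integrand_diagonal_sum:
  assumes "z \<noteq> 0"
  shows "haar_integrand False False False False z + haar_integrand False True False True z
    + haar_integrand True False True False z + haar_integrand True True True True z = 1"
proof -
  obtain x y where z: "z = (x, y)"
    by (cases z)
  have "norm z ^ 2 = norm x ^ 2 + norm y ^ 2"
    by (simp add: z norm_Pair)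
  then have "(norm x ^ 2 + norm y ^ 2) ^ 2 = norm z ^ 4"
    by (metis power_mult num_double numeral_times_numeral)
  moreover have "x * x * cnj x * cnj x + x * y * cnj x * cnj y + y * x * cnj y * cnj x + y * y * cnj y * cnj y
      = (x * cnj x + y * cnj y) ^ 2"
    by (simp add: power2_eq_square algebra_simps)
  moreover have "\<dots> = of_real ((norm x ^ 2 + norm y ^ 2) ^ 2)"
    by (simp flip: complex_norm_square)
  ultimately show ?thesis
    using assms by (simp add: haar_integrand_def qcomp_def z add_divide_distrib [symmetric])
qed

lemma ball_moment_diagonal_sum:
  "ball_moment False False False False + ball_moment False True False True
    + ball_moment True False True False + ball_moment True True True True
   = of_real (measure lborel (ball (0::complex \<times> complex) 1))"
proof -
  have "AE z \<in> ball 0 1 in lborel. haar_integrand False False False False z + haar_integrand False True False True z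
    + haar_integrand True False True False z + haar_integrand True True True True z = 1"
    using AE_lborel_singleton[of 0] by eventually_elim (simp add: haar_integrand_diagonal_sum)
  then have "(LINT z:ball 0 1|lborel. haar_integrand False False False False z + haar_integrand False True False True z
    + haar_integrand True False True False z + haar_integrand True True True True z)
    = (LINT z:ball (0::complex \<times> complex) 1|lborel. 1)"
    using haar_integrand_measurable by (intro set_lebesgue_integral_cong_AE) auto
  then show ?thesis
    using emeasure_lborel_ball_finite[of "0::complex \<times> complex" 1]
    by (simp add: ball_moment_def set_integral_const scaleR_conv_of_real)
qed

lemma haar_integrand_rotate45:
  "haar_integrand False False False False (rotate45 z) =
    (\<Sum>a\<in>UNIV. \<Sum>b\<in>UNIV. \<Sum>c\<in>UNIV. \<Sum>d\<in>UNIV.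
      (- 1) ^ (of_bool a + of_bool b + of_bool c + of_bool d) / 4 * haar_integrand a b c d z)"
proof -
  obtain x y where z: "z = (x, y)"
    by (cases z)
  define c :: complex where "c = of_real (sqrt 2 / 2)"
  have "cnj c = c"
    by (simp add: c_def)
  then have "haar_integrand False False False False (rotate45 z) =
      (c * c) * (c * c) * ((x - y) * (x - y) * (cnj x - cnj y) * (cnj x - cnj y)) / of_real (norm z ^ 4)"
    unfolding haar_integrand_def norm_rotate45 unfolding rotate45_def c_def[symmetric]
    by (simp add: qcomp_def z algebra_simps)
  also have "c * c = 1 / 2"
    by (simp add: c_def field_simps flip: of_real_mult)
  also have "1 / 2 * (1 / 2) * ((x - y) * (x - y) * (cnj x - cnj y) * (cnj x - cnj y)) =
      (\<Sum>a\<in>UNIV. \<Sum>b\<in>UNIV. \<Sum>c\<in>UNIV. \<Sum>d\<in>UNIV. (- 1) ^ (of_bool a + of_bool b + of_bool c + of_bool d) / 4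
        * (qcomp z a * qcomp z b * cnj (qcomp z c) * cnj (qcomp z d)))"
    by (simp add: UNIV_bool qcomp_def z) (simp add: algebra_simps)
  finally show ?thesis
    by (simp add: haar_integrand_def sum_divide_distrib)
qed

lemma ball_moment_rotate45: "ball_moment False False False False = 2 * ball_moment False True False True"
proof -
  have "ball_moment False False False False =
    (\<Sum>a\<in>UNIV. \<Sum>b\<in>UNIV. \<Sum>c\<in>UNIV. \<Sum>d\<in>UNIV.
      (- 1) ^ (of_bool a + of_bool b + of_bool c + of_bool d) / 4 * ball_moment a b c d)"
    using set_integral_ball_invariant[OF lborel_preserving_rotate45 norm_rotate45,
        OF haar_integrand_measurable[of False False False False]]
    by (simp add: ball_moment_def haar_integrand_rotate45 set_integral_sum)
  then show ?thesis
    using ball_moment_flip[of True True True True] ball_moment_flip[of True False True False]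
      ball_moment_commute(1)[of True False False True] ball_moment_commute(2)[of False True True False]
    by (simp add: UNIV_bool ball_moment_eq_0) (simp add: field_simps)
qed

lemma haar_moment_eq:
  "haar_moment a b c d = (of_bool (a = c \<and> b = d) + of_bool (a = d \<and> b = c)) / 6"
proof -
  define V where "V = complex_of_real (measure lborel (ball (0::complex \<times> complex) 1))"
  define m where "m = ball_moment False True False True"
  have "V \<noteq> 0"
    by (simp add: V_def)
  have flip: "ball_moment True True True True = ball_moment False False False False"
    "ball_moment True False True False = m"
    using ball_moment_flip[of True True True True] ball_moment_flip[of True False True False]
    by (simp_all add: m_def)
  have comm: "ball_moment False True True False = m" "ball_moment True False False True = m"
    using ball_moment_commute(2)[of False True True False] ball_moment_commute(1)[of True False False True]
    by (simp_all add: m_def)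
  have "ball_moment False False False False = 2 * m"
    by (simp add: m_def ball_moment_rotate45)
  moreover have "2 * ball_moment False False False False + 2 * m = V"
    using ball_moment_diagonal_sum by (simp add: flip V_def flip: m_def)
  ultimately have "m = V / 6" "ball_moment False False False False = V / 3"
    by (auto simp: field_simps)
  with \<open>V \<noteq> 0\<close> show ?thesis
    by (cases a; cases b; cases c; cases d)
      (simp_all add: haar_moment_eq_ball_moment ball_moment_eq_0 flip comm flip: V_def m_def)
qed

lemma prod_of_bool:
  "finite I \<Longrightarrow> (\<Prod>i\<in>I. of_bool (P i) :: 'a::comm_semiring_1) = of_bool (\<forall>i\<in>I. P i)"
  by (induction I rule: finite_induct) auto

lemma tr_proj_power2:
  "(tr_proj \<psi> S \<phi> q)\<^sup>2 = (\<Sum>x\<in>UNIV. \<Sum>x'\<in>UNIV. \<Sum>y\<in>UNIV. \<Sum>y'\<in>UNIV.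
     \<psi> y * cnj (\<psi> x) * (\<psi> y' * cnj (\<psi> x')) * (proj S \<phi> q x y * proj S \<phi> q x' y'))"
  unfolding tr_proj_def power2_eq_square sum_product by (simp add: mult_ac)

lemma proj_mult_proj:
  "proj S \<phi> q x y * proj S \<phi> q x' y' =
    (\<Prod>i\<in>S. \<phi> (q i) (x i) * \<phi> (q i) (x' i) * cnj (\<phi> (q i) (y i)) * cnj (\<phi> (q i) (y' i))) *
    (\<Prod>i\<in>-S. of_bool (x i = y i \<and> x' i = y' i))"
proof -
  have "(\<Prod>i\<in>-S. if x i = y i then 1 else 0) * (\<Prod>i\<in>-S. if x' i = y' i then 1 else 0)
      = (\<Prod>i\<in>-S. of_bool (x i = y i \<and> x' i = y' i) :: complex)"
    unfolding prod.distrib [symmetric] by (intro prod.cong) auto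
  then show ?thesis
    unfolding proj_def by (simp add: prod.distrib mult_ac)
qed

lemma prod_swap_indicator_eq_merge:
  fixes x x' y y' :: "'n::finite \<Rightarrow> bool"
  assumes "A \<subseteq> S"
  shows "(\<Prod>i\<in>A. of_bool (x i = y' i \<and> x' i = y i)) * (\<Prod>i\<in>S - A. of_bool (x i = y i \<and> x' i = y' i))
      * (\<Prod>i\<in>-S. of_bool (x i = y i \<and> x' i = y' i))
    = (of_bool (y = merge A x' x \<and> y' = merge A x x') :: 'a::comm_semiring_1)"
  using assms by (auto simp: prod_of_bool merge_def fun_eq_iff)

text \<open>Entrywise form of \<open>E[\<Phi>\<^sub>q \<otimes> \<Phi>\<^sub>q] = 6\<^sup>-\<^sup>s \<Sum>\<^bsub>A \<subseteq> S\<^esub> SWAP\<^sub>A\<close>.\<close>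

lemma design_average_proj_product:
  fixes S :: "'n::finite set"
  assumes moments: "\<And>a b c d. (\<Sum>j=1..N. of_real (p j) * (\<phi> j a * \<phi> j b * cnj (\<phi> j c) * cnj (\<phi> j d)))
      = (of_bool (a = c \<and> b = d) + of_bool (a = d \<and> b = c)) / 6"
  shows "(\<Sum>q\<in>PiE S (\<lambda>_. {1..N}). of_real (\<Prod>i\<in>S. p (q i)) * (proj S \<phi> q x y * proj S \<phi> q x' y'))
    = (1 / 6) ^ card S * (\<Sum>A\<in>Pow S. of_bool (y = merge A x' x \<and> y' = merge A x x'))"
proof -
  define same where "same i \<longleftrightarrow> x i = y i \<and> x' i = y' i" for i
  define swapped where "swapped i \<longleftrightarrow> x i = y' i \<and> x' i = y i" for i
  define off where "off = (\<Prod>i\<in>-S. of_bool (same i) :: complex)"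
  define \<Phi> where "\<Phi> j i = \<phi> j (x i) * \<phi> j (x' i) * cnj (\<phi> j (y i)) * cnj (\<phi> j (y' i))" for j i
  have "(\<Sum>q\<in>PiE S (\<lambda>_. {1..N}). of_real (\<Prod>i\<in>S. p (q i)) * (proj S \<phi> q x y * proj S \<phi> q x' y'))
      = (\<Sum>q\<in>PiE S (\<lambda>_. {1..N}). \<Prod>i\<in>S. of_real (p (q i)) * \<Phi> (q i) i) * off"
    unfolding proj_mult_proj
    by (simp add: \<Phi>_def off_def same_def sum_distrib_left sum_distrib_right prod.distrib mult_ac)
  also have "\<dots> = (\<Prod>i\<in>S. \<Sum>j\<in>{1..N}. of_real (p j) * \<Phi> j i) * off"
    by (simp add: prod_sum_PiE)
  also have "\<dots> = (\<Prod>i\<in>S. (of_bool (swapped i) + of_bool (same i)) / 6) * off"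
    unfolding \<Phi>_def moments same_def swapped_def by (simp add: add.commute)
  also have "\<dots> = (1 / 6) ^ card S *
      (\<Sum>A\<in>Pow S. (\<Prod>i\<in>A. of_bool (swapped i)) * (\<Prod>i\<in>S - A. of_bool (same i)) * off)"
    by (simp add: prod_dividef prod_add sum_distrib_right power_one_over)
  also have "\<dots> = (1 / 6) ^ card S * (\<Sum>A\<in>Pow S. of_bool (y = merge A x' x \<and> y' = merge A x x'))"
    unfolding off_def same_def swapped_def by (simp add: prod_swap_indicator_eq_merge)
  finally show ?thesis .
qed

text \<open>\<open>tr((\<rho> \<otimes> \<rho>) SWAP\<^sub>A)\<close>, where \<open>SWAP\<^sub>A\<close> exchanges the two copies of the qubits in \<open>A\<close>.\<close>

definition swap_trace :: "(('n::finite \<Rightarrow> bool) \<Rightarrow> complex) \<Rightarrow> 'n set \<Rightarrow> complex" where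
  "swap_trace \<psi> A =
     (\<Sum>x\<in>UNIV. \<Sum>x'\<in>UNIV. \<psi> (merge A x' x) * cnj (\<psi> x) * (\<psi> (merge A x x') * cnj (\<psi> x')))"

lemma sum_pair_delta:
  fixes f :: "'a::finite \<Rightarrow> 'b::finite \<Rightarrow> 'c::semiring_1"
  shows "(\<Sum>y\<in>UNIV. \<Sum>y'\<in>UNIV. f y y' * of_bool (y = Y \<and> y' = Y')) = f Y Y'"
proof -
  have "(\<Sum>y'\<in>UNIV. f y y' * of_bool (y = Y \<and> y' = Y')) = f y Y' * of_bool (y = Y)" for y
    by (simp add: of_bool_conj mult.assoc [symmetric])
  then show ?thesis
    by simp
qed

lemma design_average_tr_proj_power2:
  fixes \<psi> :: "('n::finite \<Rightarrow> bool) \<Rightarrow> complex"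
  assumes moments: "\<And>a b c d. (\<Sum>j=1..N. of_real (p j) * (\<phi> j a * \<phi> j b * cnj (\<phi> j c) * cnj (\<phi> j d)))
      = (of_bool (a = c \<and> b = d) + of_bool (a = d \<and> b = c)) / 6"
  shows "(\<Sum>q\<in>PiE S (\<lambda>_. {1..N}). of_real (\<Prod>i\<in>S. p (q i)) * (tr_proj \<psi> S \<phi> q)\<^sup>2)
    = (1 / 6) ^ card S * (\<Sum>A\<in>Pow S. swap_trace \<psi> A)"
proof -
  let ?Q = "PiE S (\<lambda>_. {1..N})"
  define \<rho>\<rho> where "\<rho>\<rho> x x' y y' = \<psi> y * cnj (\<psi> x) * (\<psi> y' * cnj (\<psi> x'))" for x x' y y'
  have "(\<Sum>q\<in>?Q. of_real (\<Prod>i\<in>S. p (q i)) * (tr_proj \<psi> S \<phi> q)\<^sup>2)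
      = (\<Sum>x\<in>UNIV. \<Sum>x'\<in>UNIV. \<Sum>y\<in>UNIV. \<Sum>y'\<in>UNIV. \<rho>\<rho> x x' y y' *
          (\<Sum>q\<in>?Q. of_real (\<Prod>i\<in>S. p (q i)) * (proj S \<phi> q x y * proj S \<phi> q x' y')))"
    unfolding tr_proj_power2 \<rho>\<rho>_def by (simp only: sum_distrib_left sum.swap[of _ ?Q] mult.left_commute)
  also have "\<dots> = (1 / 6) ^ card S * (\<Sum>A\<in>Pow S. \<Sum>x\<in>UNIV. \<Sum>x'\<in>UNIV. \<Sum>y\<in>UNIV. \<Sum>y'\<in>UNIV.
      \<rho>\<rho> x x' y y' * of_bool (y = merge A x' x \<and> y' = merge A x x'))"
    unfolding design_average_proj_product[OF moments]
    by (simp only: sum_distrib_left sum.swap[of _ _ "Pow S"] mult.left_commute)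
  also have "\<dots> = (1 / 6) ^ card S * (\<Sum>A\<in>Pow S. swap_trace \<psi> A)"
    by (simp only: swap_trace_def \<rho>\<rho>_def sum_pair_delta)
  finally show ?thesis .
qed

lemma bij_betw_merge: "bij_betw (\<lambda>(a, c). merge A a c) (conf A \<times> conf (- A)) UNIV"
proof (rule bij_betw_byWitness[where f' = "\<lambda>x. (\<lambda>i. i \<in> A \<and> x i, \<lambda>i. i \<notin> A \<and> x i)"])
qed (auto simp: merge_def conf_def fun_eq_iff)

lemma sum_merge:
  "(\<Sum>x\<in>UNIV. g x) = (\<Sum>a\<in>conf A. \<Sum>c\<in>conf (- A). g (merge A a c))"
  using sum.reindex_bij_betw[OF bij_betw_merge, of g] by (simp add: sum.cartesian_product split_def)

lemma merge_merge: "merge A (merge A b c) (merge A a c') = merge A b c'"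
  by (simp add: merge_def fun_eq_iff)

lemma purity_eq_swap_trace:
  fixes \<psi> :: "('n::finite \<Rightarrow> bool) \<Rightarrow> complex"
  assumes "(\<Sum>x\<in>UNIV. (cmod (\<psi> x))\<^sup>2) = 1"
  shows "purity \<psi> A = swap_trace \<psi> A"
proof (cases "A = {}")
  case True
  have "(\<Sum>x\<in>UNIV. \<psi> x * cnj (\<psi> x)) = 1"
    using arg_cong[OF assms, of complex_of_real] by (simp flip: complex_norm_square)
  moreover have "swap_trace \<psi> {} = (\<Sum>x\<in>UNIV. \<psi> x * cnj (\<psi> x)) * (\<Sum>x'\<in>UNIV. \<psi> x' * cnj (\<psi> x'))"
    by (simp add: swap_trace_def merge_def sum_product mult_ac)
  ultimately show ?thesis
    using True by (simp add: purity_def)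
next
  case False
  let ?m = "merge A"
  have "swap_trace \<psi> A = (\<Sum>a\<in>conf A. \<Sum>c'\<in>conf (- A). \<Sum>b\<in>conf A. \<Sum>c\<in>conf (- A).
      \<psi> (?m b c') * cnj (\<psi> (?m a c')) * (\<psi> (?m a c) * cnj (\<psi> (?m b c))))"
    unfolding swap_trace_def by (simp only: sum_merge[where A = A] merge_merge)
  also have "\<dots> = (\<Sum>a\<in>conf A. \<Sum>b\<in>conf A. \<Sum>c'\<in>conf (- A). \<Sum>c\<in>conf (- A).
      \<psi> (?m b c') * cnj (\<psi> (?m a c')) * (\<psi> (?m a c) * cnj (\<psi> (?m b c))))"
    by (rule sum.cong [OF refl], rule sum.swap)
  also have "\<dots> = (\<Sum>a\<in>conf A. \<Sum>b\<in>conf A. \<Sum>c\<in>conf (- A). \<Sum>c'\<in>conf (- A).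
      \<psi> (?m b c') * cnj (\<psi> (?m a c')) * (\<psi> (?m a c) * cnj (\<psi> (?m b c))))"
    by (rule sum.cong [OF refl], rule sum.cong [OF refl], rule sum.swap)
  also have "\<dots> = purity \<psi> A"
    using False by (simp add: purity_def reduced_def sum_product mult_ac)
  finally show ?thesis ..
qed

theorem theorem3:
  fixes \<psi> :: "('n::finite \<Rightarrow> bool) \<Rightarrow> complex" and S :: "'n set"
    and N :: nat and p :: "nat \<Rightarrow> real" and \<phi> :: "nat \<Rightarrow> bool \<Rightarrow> complex"
  assumes "(\<Sum>x\<in>UNIV. (cmod (\<psi> x))^2) = 1"
    and "S \<noteq> {}"
    and "is_2design N p \<phi>"
  shows "conc_ent \<psi> S = 1 - 3 ^ card S *
           (\<Sum>q\<in>PiE S (\<lambda>_. {1..N}). of_real (\<Prod>i\<in>S. p (q i)) * (tr_proj \<psi> S \<phi> q)^2)"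
proof -
  have moments: "\<And>a b c d. (\<Sum>j=1..N. of_real (p j) * (\<phi> j a * \<phi> j b * cnj (\<phi> j c) * cnj (\<phi> j d)))
      = (of_bool (a = c \<and> b = d) + of_bool (a = d \<and> b = c)) / 6"
    using assms(3) by (simp add: is_2design_def haar_moment_eq)
  have "(\<Sum>A\<in>Pow S. purity \<psi> A) = (\<Sum>A\<in>Pow S. swap_trace \<psi> A)"
    using purity_eq_swap_trace[OF assms(1)] by simp
  moreover have "(3::complex) ^ card S * (1 / 6) ^ card S = 1 / 2 ^ card S"
    by (simp only: power_mult_distrib [symmetric]) (simp add: power_one_over)
  ultimately show ?thesis
    unfolding conc_ent_def design_average_tr_proj_power2[OF moments] by (simp add: mult.assoc [symmetric])
qed

end
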